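(* Let $(\mathcal{X},\mathcal{B},\lambda)$ be a measure space with $\lambda$ positive and $\sigma$-finite, and $P$ a probability measure on it with density $f\in\mathcal{L}^2(\mathcal{X},\lambda)$ with respect to $\lambda$. Let $X_1,\dots,X_N$ be i.i.d. with law $P$. Let $f_1,\dots,f_m\in\mathcal{L}^2$ with $D_k=\int f_k^2d\lambda>0$, and assume condition $\mathcal{H}(p)$ (see context) holds for some $p\in[1,+\infty]$. Then for every $\varepsilon>0$, $$P^{\otimes N}\left\{\forall k\in\{1,\dots,m\},\ \forall g\in\mathcal{L}^2,\ d^2(\Pi_{\mathcal{CR}_{k,\varepsilon}}g,f)\le d^2(g,f)\right\}\ge1-\varepsilon.$$
   Context: $d^2(g,h)=\int(g-h)^2d\lambda$ on $\mathcal{L}^2=\mathcal{L}^2(\mathcal{X},\lambda)$. $\hat\alpha_k=\frac{\frac1N\sum_{i=1}^Nf_k(X_i)}{D_k}$. $\mathcal{M}_k=\{\alpha f_k:\alpha\in\mathbb{R}\}$, $\Pi_{\mathcal{M}_k}$ the orthogonal projection onto it. Condition $\mathcal{H}(p)$: for $1<p<\infty$ with $\frac1p+\frac1q=1$, there are known constants $c,c_1,\dots,c_m>0$ with $(\int|f_k|^{2p}d\lambda)^{1/p}\le c_k\int f_k^2d\lambda$ for all $k$ and $(\int|f|^qd\lambda)^{1/q}\le c$; for $p=1$: $f\le c$ everywhere and $c_k=1$; for $p=\infty$: $|f_k|\le\sqrt{c_kD_k}$ everywhere and $c=1$. $C_k=c_kc$. $\beta(\varepsilon,k)=\frac{4[1+\log\frac{2m}{\varepsilon}]}{N}\left[\frac{\frac1N\sum_if_k(X_i)^2}{D_k}+C_k\right]$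 and $\mathcal{CR}_{k,\varepsilon}=\{g\in\mathcal{L}^2:d^2(\hat\alpha_kf_k,\Pi_{\mathcal{M}_k}g)\le\beta(\varepsilon,k)\}$, a closed convex set; $\Pi_{\mathcal{CR}_{k,\varepsilon}}$ denotes the metric (nearest-point) projection onto it in $\mathcal{L}^2$. *)

theory Defs
  imports "HOL-Probability.Probability"
begin

definition L2 :: "'a measure \<Rightarrow> ('a \<Rightarrow> real) set" where
  "L2 M = {g. g \<in> borel_measurable M \<and> integrable M (\<lambda>x. (g x)\<^sup>2)}"

definition dist2 :: "'a measure \<Rightarrow> ('a \<Rightarrow> real) \<Rightarrow> ('a \<Rightarrow> real) \<Rightarrow> real" where
  "dist2 M g h = (LINT x|M. (g x - h x)\<^sup>2)"

definition proj_line :: "'a measure \<Rightarrow> ('a \<Rightarrow> real) \<Rightarrow> ('a \<Rightarrow> real) \<Rightarrow> ('a \<Rightarrow> real)" where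
  "proj_line M h g = (\<lambda>x. ((LINT y|M. g y * h y) / (LINT y|M. (h y)\<^sup>2)) * h x)"

definition is_metric_proj :: "'a measure \<Rightarrow> ('a \<Rightarrow> real) set \<Rightarrow> ('a \<Rightarrow> real) \<Rightarrow> ('a \<Rightarrow> real) \<Rightarrow> bool" where
  "is_metric_proj M C g p \<longleftrightarrow> p \<in> C \<and> (\<forall>h\<in>C. dist2 M p g \<le> dist2 M h g)"

definition cond_H :: "'a measure \<Rightarrow> ('a \<Rightarrow> real) \<Rightarrow> (nat \<Rightarrow> 'a \<Rightarrow> real) \<Rightarrow> nat
    \<Rightarrow> real \<Rightarrow> (nat \<Rightarrow> real) \<Rightarrow> ereal \<Rightarrow> bool" where
  "cond_H M f fs m c cs p \<longleftrightarrow> 1 \<le> p \<and> c > 0 \<and> (\<forall>k<m. cs k > 0) \<and>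
     (if p = 1 then (\<forall>x\<in>space M. f x \<le> c) \<and> (\<forall>k<m. cs k = 1)
      else if p = \<infinity> then
        (\<forall>k<m. \<forall>x\<in>space M. \<bar>fs k x\<bar> \<le> sqrt (cs k * (LINT y|M. (fs k y)\<^sup>2))) \<and> c = 1
      else (let p' = real_of_ereal p; q = p' / (p' - 1) in
        (\<forall>k<m. integrable M (\<lambda>x. \<bar>fs k x\<bar> powr (2 * p')) \<and>
           (LINT x|M. \<bar>fs k x\<bar> powr (2 * p')) powr (1 / p') \<le> cs k * (LINT x|M. (fs k x)\<^sup>2)) \<and>
        integrable M (\<lambda>x. \<bar>f x\<bar> powr q) \<and>
        (LINT x|M. \<bar>f x\<bar> powr q) powr (1 / q) \<le> c))"

definition alpha_hat :: "'a measure \<Rightarrow> (nat \<Rightarrow> 'a \<Rightarrow> real) \<Rightarrow> nat \<Rightarrow> (nat \<Rightarrow> 'a) \<Rightarrow> nat \<Rightarrow> real" where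
  "alpha_hat M fs N \<omega> k = ((\<Sum>i<N. fs k (\<omega> i)) / real N) / (LINT y|M. (fs k y)\<^sup>2)"

definition beta :: "'a measure \<Rightarrow> (nat \<Rightarrow> 'a \<Rightarrow> real) \<Rightarrow> nat \<Rightarrow> real \<Rightarrow> (nat \<Rightarrow> real)
    \<Rightarrow> nat \<Rightarrow> (nat \<Rightarrow> 'a) \<Rightarrow> real \<Rightarrow> nat \<Rightarrow> real" where
  "beta M fs m c cs N \<omega> \<epsilon> k =
     4 * (1 + ln (2 * real m / \<epsilon>)) / real N *
     (((\<Sum>i<N. (fs k (\<omega> i))\<^sup>2) / real N) / (LINT y|M. (fs k y)\<^sup>2) + cs k * c)"

definition CR :: "'a measure \<Rightarrow> (nat \<Rightarrow> 'a \<Rightarrow> real) \<Rightarrow> nat \<Rightarrow> real \<Rightarrow> (nat \<Rightarrow> real)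
    \<Rightarrow> nat \<Rightarrow> (nat \<Rightarrow> 'a) \<Rightarrow> real \<Rightarrow> nat \<Rightarrow> ('a \<Rightarrow> real) set" where
  "CR M fs m c cs N \<omega> \<epsilon> k = {g \<in> L2 M.
     dist2 M (\<lambda>x. alpha_hat M fs N \<omega> k * fs k x) (proj_line M (fs k) g)
       \<le> beta M fs m c cs N \<omega> \<epsilon> k}"

end

(* Projecting onto a closed convex set never increases the distance to a point of that set. The
   confidence region CR_k is a slab orthogonal to f_k, so the event of the theorem holds exactly
   when every CR_k is empty or contains f. Whether f lies in CR_k is a self-normalised deviation
   question for S = sum_i f_k(X_i) - N E f_k(X) and R = sum_i f_k(X_i)^2 + N s, where Hoelder's
   inequality and H(p) give E f_k(X)^2 <= s = c_k c D_k. Since exp (x - x^2/2) <= 1 + x + x^2/2,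
   every exp (l S - l^2 R / 2) has expectation at most 1; Chernoff bounds at the scales
   l = +-sqrt (L / (4^j N s)), j < ceil L, together with Markov's inequality for R give
   P (4 L R < S^2) <= 5 exp (-L). With L = 1 + ln (2m / eps) a union bound over k concludes. *)

theory Submission
  imports Defs
begin

section \<open>Geometry of L2\<close>

definition L2_inner :: "'a measure \<Rightarrow> ('a \<Rightarrow> real) \<Rightarrow> ('a \<Rightarrow> real) \<Rightarrow> real" where
  "L2_inner M g h = (LINT x|M. g x * h x)"

lemma L2_measurable [measurable_dest]: "g \<in> L2 M \<Longrightarrow> g \<in> borel_measurable M"
  by (simp add: L2_def)

lemma L2_integrable_square: "g \<in> L2 M \<Longrightarrow> integrable M (\<lambda>x. (g x)\<^sup>2)"
  by (simp add: L2_def)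

lemma L2_inner_self: "L2_inner M g g = (LINT x|M. (g x)\<^sup>2)"
  by (simp add: L2_inner_def power2_eq_square)

lemma L2_inner_self_nonneg: "0 \<le> L2_inner M g g"
  by (simp add: L2_inner_self)

lemma abs_mult_le_sum_squares: "\<bar>a * b\<bar> \<le> a\<^sup>2 + (b::real)\<^sup>2"
proof -
  have "2 * (\<bar>a\<bar> * \<bar>b\<bar>) \<le> a\<^sup>2 + b\<^sup>2"
    using sum_squares_bound[of "\<bar>a\<bar>" "\<bar>b\<bar>"] by (simp add: mult.assoc)
  moreover have "0 \<le> \<bar>a\<bar> * \<bar>b\<bar>"
    by simp
  ultimately show ?thesis
    unfolding abs_mult by linarith
qed

lemma L2_integrable_mult:
  assumes "g \<in> L2 M" "h \<in> L2 M"
  shows "integrable M (\<lambda>x. g x * h x)"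
proof (rule Bochner_Integration.integrable_bound)
  show "integrable M (\<lambda>x. (g x)\<^sup>2 + (h x)\<^sup>2)"
    using assms by (intro Bochner_Integration.integrable_add L2_integrable_square)
  show "AE x in M. norm (g x * h x) \<le> norm ((g x)\<^sup>2 + (h x)\<^sup>2)"
    using abs_mult_le_sum_squares by (intro AE_I2) simp
qed (use assms in measurable)

lemma L2_lincomb:
  assumes "g \<in> L2 M" "h \<in> L2 M"
  shows "(\<lambda>x. a * g x + b * h x) \<in> L2 M"
proof -
  have "(\<lambda>x. (a * g x + b * h x)\<^sup>2) = (\<lambda>x. a\<^sup>2 * (g x)\<^sup>2 + 2 * a * b * (g x * h x) + b\<^sup>2 * (h x)\<^sup>2)"
    by (simp add: fun_eq_iff power2_eq_square algebra_simps)
  moreover have "integrable M \<dots>"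
    using assms by (intro Bochner_Integration.integrable_add integrable_mult_right
        L2_integrable_square L2_integrable_mult)
  moreover have "(\<lambda>x. a * g x + b * h x) \<in> borel_measurable M"
    using assms by measurable
  ultimately show ?thesis
    by (simp add: L2_def)
qed

lemma L2_inner_lincomb_left:
  assumes "g \<in> L2 M" "h \<in> L2 M" "k \<in> L2 M"
  shows "L2_inner M (\<lambda>x. a * g x + b * h x) k = a * L2_inner M g k + b * L2_inner M h k"
proof -
  have "(\<lambda>x. (a * g x + b * h x) * k x) = (\<lambda>x. a * (g x * k x) + b * (h x * k x))"
    by (simp add: fun_eq_iff algebra_simps)
  then show ?thesis
    using L2_integrable_mult[OF assms(1,3)] L2_integrable_mult[OF assms(2,3)]
    by (simp add: L2_inner_def)
qed

lemma integral_square_add_scaled: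
  assumes "u \<in> L2 M" "v \<in> L2 M"
  shows "(LINT x|M. (u x + t * v x)\<^sup>2) = L2_inner M u u + 2 * t * L2_inner M u v + t\<^sup>2 * L2_inner M v v"
proof -
  have "(\<lambda>x. (u x + t * v x)\<^sup>2) = (\<lambda>x. u x * u x + (2 * t) * (u x * v x) + t\<^sup>2 * (v x * v x))"
    by (simp add: fun_eq_iff power2_eq_square algebra_simps)
  then show ?thesis
    using assms by (simp add: L2_inner_def L2_integrable_mult)
qed

lemma L2_Cauchy_Schwarz:
  assumes "u \<in> L2 M" "v \<in> L2 M" "0 < L2_inner M v v"
  shows "(L2_inner M u v)\<^sup>2 \<le> L2_inner M u u * L2_inner M v v"
proof -
  define t where "t = - L2_inner M u v / L2_inner M v v"
  have "0 \<le> L2_inner M u u + 2 * t * L2_inner M u v + t\<^sup>2 * L2_inner M v v"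
    unfolding integral_square_add_scaled[OF assms(1,2), symmetric] by simp
  also have "\<dots> = L2_inner M u u - (L2_inner M u v)\<^sup>2 / L2_inner M v v"
    using assms(3) by (simp add: t_def field_simps power2_eq_square)
  finally show ?thesis
    using assms(3) by (simp add: field_simps)
qed

lemma metric_proj_convex_inner_nonneg:
  assumes C: "C \<subseteq> L2 M"
    and convex: "\<And>h h' t. h \<in> C \<Longrightarrow> h' \<in> C \<Longrightarrow> 0 \<le> t \<Longrightarrow> t \<le> 1 \<Longrightarrow>
                   (\<lambda>x. (1 - t) * h x + t * h' x) \<in> C"
    and f: "f \<in> C" and g: "g \<in> L2 M" and proj: "is_metric_proj M C g q"
  shows "0 \<le> L2_inner M (\<lambda>x. q x - g x) (\<lambda>x. f x - q x)"
proof -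
  have q: "q \<in> C" and nearest: "\<And>h. h \<in> C \<Longrightarrow> dist2 M q g \<le> dist2 M h g"
    using proj by (auto simp: is_metric_proj_def)
  define u where "u = (\<lambda>x. q x - g x)"
  define v where "v = (\<lambda>x. f x - q x)"
  have u: "u \<in> L2 M" and v: "v \<in> L2 M"
    using L2_lincomb[of q M g 1 "-1"] L2_lincomb[of f M q 1 "-1"] q f g C
    by (auto simp: u_def v_def)
  have dist2_along: "dist2 M (\<lambda>x. (1 - t) * q x + t * f x) g =
      L2_inner M u u + 2 * t * L2_inner M u v + t\<^sup>2 * L2_inner M v v" for t
  proof -
    have "(\<lambda>x. ((1 - t) * q x + t * f x - g x)\<^sup>2) = (\<lambda>x. (u x + t * v x)\<^sup>2)"
      by (simp add: fun_eq_iff u_def v_def algebra_simps)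
    then show ?thesis
      unfolding dist2_def by (simp add: integral_square_add_scaled[OF u v])
  qed
  have step: "0 \<le> 2 * L2_inner M u v + t * L2_inner M v v" if t: "0 < t" "t \<le> 1" for t
  proof -
    have "dist2 M q g \<le> dist2 M (\<lambda>x. (1 - t) * q x + t * f x) g"
      using t by (intro nearest convex q f) auto
    then have "0 \<le> t * (2 * L2_inner M u v + t * L2_inner M v v)"
      using dist2_along[of 0] dist2_along[of t] by (simp add: power2_eq_square distrib_left)
    then show ?thesis
      using t by (simp add: zero_le_mult_iff)
  qed
  have "((\<lambda>t. 2 * L2_inner M u v + t * L2_inner M v v) \<longlongrightarrow> 2 * L2_inner M u v + 0 * L2_inner M v v)
      (at_right 0)"
    by (intro tendsto_intros)
  moreover have "eventually (\<lambda>t. 0 \<le> 2 * L2_inner M u v + t * L2_inner M v v) (at_right 0)"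
    using eventually_at_right_real[of 0 1] by (rule eventually_mono) (auto intro: step)
  ultimately have "0 \<le> 2 * L2_inner M u v"
    using tendsto_lowerbound by fastforce
  then show ?thesis
    by (simp add: u_def v_def)
qed

lemma metric_proj_convex_dist2_le:
  assumes C: "C \<subseteq> L2 M"
    and convex: "\<And>h h' t. h \<in> C \<Longrightarrow> h' \<in> C \<Longrightarrow> 0 \<le> t \<Longrightarrow> t \<le> 1 \<Longrightarrow>
                   (\<lambda>x. (1 - t) * h x + t * h' x) \<in> C"
    and f: "f \<in> C" and g: "g \<in> L2 M" and proj: "is_metric_proj M C g q"
  shows "dist2 M q f \<le> dist2 M g f"
proof -
  have "q \<in> L2 M"
    using proj C by (auto simp: is_metric_proj_def)
  then have u: "(\<lambda>x. q x - g x) \<in> L2 M" and v: "(\<lambda>x. f x - q x) \<in> L2 M"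
    using L2_lincomb[of q M g 1 "-1"] L2_lincomb[of f M q 1 "-1"] f g C by auto
  have "dist2 M g f = (LINT x|M. ((q x - g x) + 1 * (f x - q x))\<^sup>2)"
    by (simp add: dist2_def power2_commute)
  also have "\<dots> = L2_inner M (\<lambda>x. q x - g x) (\<lambda>x. q x - g x) +
      2 * 1 * L2_inner M (\<lambda>x. q x - g x) (\<lambda>x. f x - q x) + 1\<^sup>2 * L2_inner M (\<lambda>x. f x - q x) (\<lambda>x. f x - q x)"
    by (rule integral_square_add_scaled[OF u v])
  finally have "dist2 M g f = L2_inner M (\<lambda>x. q x - g x) (\<lambda>x. q x - g x) +
      2 * L2_inner M (\<lambda>x. q x - g x) (\<lambda>x. f x - q x) + L2_inner M (\<lambda>x. f x - q x) (\<lambda>x. f x - q x)"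
    by simp
  moreover have "dist2 M q f = L2_inner M (\<lambda>x. f x - q x) (\<lambda>x. f x - q x)"
    by (simp add: dist2_def L2_inner_self power2_commute)
  ultimately show ?thesis
    using metric_proj_convex_inner_nonneg[OF assms] L2_inner_self_nonneg[of M "\<lambda>x. q x - g x"]
    by linarith
qed

definition slab :: "'a measure \<Rightarrow> ('a \<Rightarrow> real) \<Rightarrow> real \<Rightarrow> real \<Rightarrow> ('a \<Rightarrow> real) set" where
  "slab M h a b = {g \<in> L2 M. (a - L2_inner M g h / L2_inner M h h)\<^sup>2 * L2_inner M h h \<le> b}"

lemma dist2_scaled_proj_line:
  "dist2 M (\<lambda>x. a * h x) (proj_line M h g) =
     (a - L2_inner M g h / L2_inner M h h)\<^sup>2 * L2_inner M h h"
proof -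
  have "(\<lambda>x. (a * h x - proj_line M h g x)\<^sup>2) =
      (\<lambda>x. (a - L2_inner M g h / L2_inner M h h)\<^sup>2 * (h x)\<^sup>2)"
    by (simp add: fun_eq_iff proj_line_def L2_inner_def power2_eq_square algebra_simps)
  then show ?thesis
    by (simp add: dist2_def L2_inner_self)
qed

lemma CR_eq_slab:
  "CR M fs m c cs N \<omega> \<epsilon> k = slab M (fs k) (alpha_hat M fs N \<omega> k) (beta M fs m c cs N \<omega> \<epsilon> k)"
  by (simp add: CR_def slab_def dist2_scaled_proj_line)

lemma square_convex_comb_le:
  fixes x y t :: real
  assumes "0 \<le> t" "t \<le> 1"
  shows "((1 - t) * x + t * y)\<^sup>2 \<le> (1 - t) * x\<^sup>2 + t * y\<^sup>2"
proof -
  have "(1 - t) * x\<^sup>2 + t * y\<^sup>2 - ((1 - t) * x + t * y)\<^sup>2 = t * (1 - t) * (x - y)\<^sup>2"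
    by (simp add: power2_eq_square algebra_simps)
  moreover have "0 \<le> t * (1 - t) * (x - y)\<^sup>2"
    using assms by simp
  ultimately show ?thesis
    by linarith
qed

lemma slab_convex:
  assumes h: "h \<in> L2 M" and g: "g \<in> slab M h a b" and g': "g' \<in> slab M h a b"
    and t: "0 \<le> t" "t \<le> 1"
  shows "(\<lambda>x. (1 - t) * g x + t * g' x) \<in> slab M h a b"
proof -
  define D where "D = L2_inner M h h"
  define \<gamma> where "\<gamma> u = L2_inner M u h / D" for u
  have g: "g \<in> L2 M" "(a - \<gamma> g)\<^sup>2 * D \<le> b" and g': "g' \<in> L2 M" "(a - \<gamma> g')\<^sup>2 * D \<le> b"
    using g g' by (auto simp: slab_def \<gamma>_def D_def)
  have "a - \<gamma> (\<lambda>x. (1 - t) * g x + t * g' x) = (1 - t) * (a - \<gamma> g) + t * (a - \<gamma> g')"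
    unfolding \<gamma>_def L2_inner_lincomb_left[OF g(1) g'(1) h]
    by (simp add: add_divide_distrib diff_divide_distrib algebra_simps)
  then have "(a - \<gamma> (\<lambda>x. (1 - t) * g x + t * g' x))\<^sup>2 * D \<le>
      ((1 - t) * (a - \<gamma> g)\<^sup>2 + t * (a - \<gamma> g')\<^sup>2) * D"
    using t by (simp add: mult_right_mono square_convex_comb_le D_def L2_inner_self_nonneg)
  also have "\<dots> = (1 - t) * ((a - \<gamma> g)\<^sup>2 * D) + t * ((a - \<gamma> g')\<^sup>2 * D)"
    by (simp add: algebra_simps)
  also have "\<dots> \<le> (1 - t) * b + t * b"
    using g g' t by (intro add_mono mult_left_mono) auto
  also have "\<dots> = b"
    by (simp add: algebra_simps)
  finally show ?thesis
    using L2_lincomb[OF g(1) g'(1)] by (simp add: slab_def \<gamma>_def D_def)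
qed

lemma slab_empty_of_neg:
  assumes "b < 0"
  shows "slab M h a b = {}"
proof -
  have "b < (a - L2_inner M g h / L2_inner M h h)\<^sup>2 * L2_inner M h h" for g
    using assms L2_inner_self_nonneg[of M h] by (smt (verit) mult_nonneg_nonneg zero_le_power2)
  then show ?thesis
    unfolding slab_def by (simp add: not_le)
qed

lemma L2_inner_diff_square_le_dist2:
  assumes "g \<in> L2 M" "f \<in> L2 M" "h \<in> L2 M" "0 < L2_inner M h h"
  shows "(L2_inner M g h - L2_inner M f h)\<^sup>2 \<le> dist2 M g f * L2_inner M h h"
proof -
  have "(\<lambda>x. 1 * g x + (-1) * f x) \<in> L2 M"
    using assms by (intro L2_lincomb)
  from L2_Cauchy_Schwarz[OF this assms(3,4)] show ?thesis
    using L2_inner_lincomb_left[OF assms(1-3), of 1 "-1"]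
    by (simp add: L2_inner_self dist2_def)
qed

lemma interval_endpoint_nearest:
  fixes a r x y :: real
  assumes "\<bar>a - y\<bar> \<le> r" "r < \<bar>a - x\<bar>"
  shows "\<bar>(if a < x then a + r else a - r) - x\<bar> \<le> \<bar>y - x\<bar>"
  using assms by (auto simp: abs_if split: if_split_asm)

lemma mem_slab_iff_abs:
  assumes "0 < L2_inner M h h"
  shows "g \<in> slab M h a b \<longleftrightarrow>
    g \<in> L2 M \<and> \<bar>a - L2_inner M g h / L2_inner M h h\<bar> \<le> sqrt (b / L2_inner M h h)"
proof -
  have "z\<^sup>2 * L2_inner M h h \<le> b \<longleftrightarrow> \<bar>z\<bar> \<le> sqrt (b / L2_inner M h h)" for z
  proof -
    have "z\<^sup>2 * L2_inner M h h \<le> b \<longleftrightarrow> z\<^sup>2 \<le> b / L2_inner M h h"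
      using assms by (simp add: pos_le_divide_eq)
    also have "\<dots> \<longleftrightarrow> sqrt (z\<^sup>2) \<le> sqrt (b / L2_inner M h h)"
      by (rule real_sqrt_le_iff[symmetric])
    finally show ?thesis
      by simp
  qed
  then show ?thesis
    by (simp add: slab_def)
qed

(* The projection moves f along h onto the nearer face of the slab. *)
lemma slab_metric_proj_outside:
  assumes f: "f \<in> L2 M" and h: "h \<in> L2 M" "0 < L2_inner M h h"
    and b: "0 \<le> b" and outside: "f \<notin> slab M h a b"
  shows "\<exists>q. is_metric_proj M (slab M h a b) f q \<and> 0 < dist2 M q f"
proof -
  define D where "D = L2_inner M h h"
  define \<gamma> where "\<gamma> u = L2_inner M u h / D" for u
  define r where "r = sqrt (b / D)"
  define c where "c = (if a < \<gamma> f then a + r else a - r)"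
  define q where "q = (\<lambda>x. 1 * f x + (c - \<gamma> f) * h x)"
  have D: "0 < D"
    using h by (simp add: D_def)
  have slab_iff: "u \<in> slab M h a b \<longleftrightarrow> u \<in> L2 M \<and> \<bar>a - \<gamma> u\<bar> \<le> r" for u
    unfolding mem_slab_iff_abs[OF h(2)] by (simp add: \<gamma>_def r_def D_def)
  have r: "r < \<bar>a - \<gamma> f\<bar>"
    using outside f unfolding slab_iff by simp
  have ac: "\<bar>a - c\<bar> = r"
    using D b by (auto simp: c_def r_def)
  have q: "q \<in> L2 M"
    unfolding q_def using f h(1) by (rule L2_lincomb)
  have "\<gamma> q = c"
    unfolding q_def \<gamma>_def L2_inner_lincomb_left[OF f h(1) h(1)] D_def[symmetric]
    using D by (simp add: field_simps)
  with q ac have q_slab: "q \<in> slab M h a b"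
    by (simp add: slab_iff)
  have dist_q: "dist2 M q f = (c - \<gamma> f)\<^sup>2 * D"
    by (simp add: q_def dist2_def power_mult_distrib D_def L2_inner_self)
  have "dist2 M q f \<le> dist2 M g f" if "g \<in> slab M h a b" for g
  proof -
    have g: "g \<in> L2 M" "\<bar>a - \<gamma> g\<bar> \<le> r"
      using that by (auto simp: slab_iff)
    have "(c - \<gamma> f)\<^sup>2 \<le> (\<gamma> g - \<gamma> f)\<^sup>2"
      using interval_endpoint_nearest[OF g(2) r] by (simp add: c_def abs_le_square_iff)
    then have "dist2 M q f \<le> (\<gamma> g - \<gamma> f)\<^sup>2 * D"
      using D by (simp add: dist_q)
    also have "\<dots> = (L2_inner M g h - L2_inner M f h)\<^sup>2 / D"
      using D by (simp add: \<gamma>_def power2_eq_square field_simps)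
    also have "\<dots> \<le> dist2 M g f"
      using L2_inner_diff_square_le_dist2[OF g(1) f h] D by (simp add: D_def divide_le_eq)
    finally show ?thesis .
  qed
  moreover have "0 < dist2 M q f"
    using ac r D by (auto simp: dist_q)
  ultimately show ?thesis
    using q_slab unfolding is_metric_proj_def by blast
qed

lemma slab_metric_proj_dist2_le_iff:
  assumes f: "f \<in> L2 M" and h: "h \<in> L2 M" "0 < L2_inner M h h"
  shows "(\<forall>g\<in>L2 M. \<forall>q. is_metric_proj M (slab M h a b) g q \<longrightarrow> dist2 M q f \<le> dist2 M g f) \<longleftrightarrow>
         b < 0 \<or> f \<in> slab M h a b"
proof
  assume proj_le: "\<forall>g\<in>L2 M. \<forall>q. is_metric_proj M (slab M h a b) g q \<longrightarrow> dist2 M q f \<le> dist2 M g f"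
  show "b < 0 \<or> f \<in> slab M h a b"
  proof (rule ccontr)
    assume "\<not> (b < 0 \<or> f \<in> slab M h a b)"
    then have "0 \<le> b" "f \<notin> slab M h a b"
      by auto
    then obtain q where "is_metric_proj M (slab M h a b) f q" "0 < dist2 M q f"
      using slab_metric_proj_outside[OF f h] by blast
    with proj_le f show False
      by (force simp: dist2_def)
  qed
next
  assume "b < 0 \<or> f \<in> slab M h a b"
  then show "\<forall>g\<in>L2 M. \<forall>q. is_metric_proj M (slab M h a b) g q \<longrightarrow> dist2 M q f \<le> dist2 M g f"
  proof
    assume "b < 0"
    then show ?thesis
      by (simp add: slab_empty_of_neg is_metric_proj_def)
  next
    assume f_slab: "f \<in> slab M h a b"
    have "slab M h a b \<subseteq> L2 M"
      by (auto simp: slab_def)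
    then show ?thesis
      using metric_proj_convex_dist2_le[OF _ slab_convex[OF h(1)] f_slab] by blast
  qed
qed

section \<open>Second moments under condition H(p)\<close>

lemma integrable_integral_le_of_nonneg_le:
  fixes u w :: "'a \<Rightarrow> real"
  assumes w: "integrable M w" and u: "u \<in> borel_measurable M"
    and nonneg: "\<And>x. x \<in> space M \<Longrightarrow> 0 \<le> u x" and le: "\<And>x. x \<in> space M \<Longrightarrow> u x \<le> w x"
  shows "integrable M u \<and> integral\<^sup>L M u \<le> integral\<^sup>L M w"
proof
  show "integrable M u"
    using w u by (rule Bochner_Integration.integrable_bound)
      (use nonneg le in \<open>auto intro!: AE_I2 simp: abs_of_nonneg order.trans[OF _ le]\<close>)
  then show "integral\<^sup>L M u \<le> integral\<^sup>L M w"
    using w le by (rule integral_mono)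
qed

lemma integral_le_of_powr_integral_le:
  fixes u :: "'a \<Rightarrow> real"
  assumes "0 < p" "(LINT x|M. u x powr p) powr (1 / p) \<le> A"
  shows "(LINT x|M. u x powr p) \<le> A powr p"
proof -
  have "0 \<le> (LINT x|M. u x powr p)"
    by simp
  then have "(LINT x|M. u x powr p) = ((LINT x|M. u x powr p) powr (1 / p)) powr p"
    using assms(1) by (simp add: powr_powr)
  also have "\<dots> \<le> A powr p"
    using assms by (intro powr_mono2) auto
  finally show ?thesis .
qed

lemma Hoelder_integral_le:
  fixes u v :: "'a \<Rightarrow> real"
  assumes pq: "1 < p" "1 < q" "1 / p + 1 / q = 1"
    and [measurable]: "u \<in> borel_measurable M" "v \<in> borel_measurable M"
    and nonneg: "\<And>x. x \<in> space M \<Longrightarrow> 0 \<le> u x" "\<And>x. x \<in> space M \<Longrightarrow> 0 \<le> v x"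
    and integrable: "integrable M (\<lambda>x. u x powr p)" "integrable M (\<lambda>x. v x powr q)"
    and bounds: "(LINT x|M. u x powr p) powr (1 / p) \<le> A" "(LINT x|M. v x powr q) powr (1 / q) \<le> B"
    and AB: "0 < A" "0 < B"
  shows "integrable M (\<lambda>x. u x * v x) \<and> (LINT x|M. u x * v x) \<le> A * B"
proof -
  define w where "w x = A * B / p * (u x powr p / A powr p) + A * B / q * (v x powr q / B powr q)" for x
  have le_w: "u x * v x \<le> w x" if x: "x \<in> space M" for x
  proof -
    have "(u x / A) * (v x / B) \<le> (u x / A) powr p / p + (v x / B) powr q / q"
      using pq nonneg[OF x] AB by (intro Youngs_inequality) auto
    then have "A * B * ((u x / A) * (v x / B)) \<le> A * B * ((u x / A) powr p / p + (v x / B) powr q / q)"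
      using AB by (intro mult_left_mono) auto
    then show ?thesis
      using AB nonneg[OF x] by (simp add: w_def powr_divide field_simps)
  qed
  have integrable_w: "integrable M w"
    unfolding w_def using integrable by simp
  have "integral\<^sup>L M w \<le> A * B / p * 1 + A * B / q * 1"
  proof -
    have "integral\<^sup>L M w =
        A * B / p * ((LINT x|M. u x powr p) / A powr p) + A * B / q * ((LINT x|M. v x powr q) / B powr q)"
      unfolding w_def using integrable
      by (simp only: Bochner_Integration.integral_add integrable_mult_right integrable_divide
          integral_mult_right_zero integral_divide_zero)
    also have "\<dots> \<le> A * B / p * 1 + A * B / q * 1"
      using integral_le_of_powr_integral_le[OF _ bounds(1)] integral_le_of_powr_integral_le[OF _ bounds(2)]
        pq AB by (intro add_mono mult_left_mono) simp_all
    finally show ?thesis .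
  qed
  also have "\<dots> = A * B * (1 / p + 1 / q)"
    by (simp add: algebra_simps)
  finally have "integral\<^sup>L M w \<le> A * B"
    using pq(3) by simp
  moreover have "integrable M (\<lambda>x. u x * v x) \<and> (LINT x|M. u x * v x) \<le> integral\<^sup>L M w"
    using integrable_w le_w nonneg by (intro integrable_integral_le_of_nonneg_le) auto
  ultimately show ?thesis
    by linarith
qed

lemma square_powr: "(y\<^sup>2) powr p = \<bar>y\<bar> powr (2 * p)" for y p :: real
proof (cases "y = 0")
  case False
  then have "y\<^sup>2 = \<bar>y\<bar> powr 2"
    by simp
  then show ?thesis
    by (simp only: powr_powr)
qed simp

lemma weighted_square_integral_le_Hoelder:
  fixes f g :: "'a \<Rightarrow> real"
  assumes p: "1 < p" and [measurable]: "f \<in> borel_measurable M" "g \<in> borel_measurable M"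
    and f_nonneg: "\<And>x. x \<in> space M \<Longrightarrow> 0 \<le> f x"
    and g_integrable: "integrable M (\<lambda>x. \<bar>g x\<bar> powr (2 * p))"
    and g_bound: "(LINT x|M. \<bar>g x\<bar> powr (2 * p)) powr (1 / p) \<le> A"
    and f_integrable: "integrable M (\<lambda>x. \<bar>f x\<bar> powr (p / (p - 1)))"
    and f_bound: "(LINT x|M. \<bar>f x\<bar> powr (p / (p - 1))) powr (1 / (p / (p - 1))) \<le> B"
    and AB: "0 < A" "0 < B"
  shows "integrable M (\<lambda>x. f x * (g x)\<^sup>2) \<and> (LINT x|M. f x * (g x)\<^sup>2) \<le> A * B"
proof -
  define q where "q = p / (p - 1)"
  have q: "1 < q" "1 / p + 1 / q = 1"
    using p by (auto simp: q_def field_simps)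
  have "integrable M (\<lambda>x. ((g x)\<^sup>2) powr p)" "(LINT x|M. ((g x)\<^sup>2) powr p) powr (1 / p) \<le> A"
    using g_integrable g_bound by (simp_all add: square_powr)
  moreover have "integrable M (\<lambda>x. \<bar>f x\<bar> powr q) \<longleftrightarrow> integrable M (\<lambda>x. f x powr q)"
    by (rule Bochner_Integration.integrable_cong) (simp_all add: f_nonneg)
  moreover have "(LINT x|M. \<bar>f x\<bar> powr q) = (LINT x|M. f x powr q)"
    by (rule Bochner_Integration.integral_cong) (simp_all add: f_nonneg)
  ultimately have "integrable M (\<lambda>x. (g x)\<^sup>2 * f x) \<and> (LINT x|M. (g x)\<^sup>2 * f x) \<le> A * B"
    using f_integrable f_bound f_nonneg AB
    by (intro Hoelder_integral_le[OF p q]) (simp_all add: q_def)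
  then show ?thesis
    by (simp add: mult.commute)
qed

lemma cond_HE:
  assumes "cond_H M f fs m c cs p" "k < m"
  obtains (one) "\<forall>x\<in>space M. f x \<le> c" "cs k = 1"
  | (infinity) "\<forall>x\<in>space M. \<bar>fs k x\<bar> \<le> sqrt (cs k * (LINT x|M. (fs k x)\<^sup>2))" "c = 1"
  | (finite) p' where "1 < p'" "integrable M (\<lambda>x. \<bar>fs k x\<bar> powr (2 * p'))"
      "(LINT x|M. \<bar>fs k x\<bar> powr (2 * p')) powr (1 / p') \<le> cs k * (LINT x|M. (fs k x)\<^sup>2)"
      "integrable M (\<lambda>x. \<bar>f x\<bar> powr (p' / (p' - 1)))"
      "(LINT x|M. \<bar>f x\<bar> powr (p' / (p' - 1))) powr (1 / (p' / (p' - 1))) \<le> c"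
proof -
  have "1 \<le> p"
    using assms(1) by (simp add: cond_H_def)
  then consider "p = 1" | "p = \<infinity>" | p' where "p = ereal p'" "1 < p'"
    by (cases p) (auto simp: one_ereal_def le_less)
  then show ?thesis
  proof cases
    case 1
    with assms show ?thesis
      by (intro one) (auto simp: cond_H_def)
  next
    case 2
    with assms show ?thesis
      by (intro infinity) (auto simp: cond_H_def)
  next
    case (3 p')
    then have "p \<noteq> 1" "p \<noteq> \<infinity>" "real_of_ereal p = p'"
      by auto
    with assms 3(2) show ?thesis
      by (intro finite[of p']) (auto simp: cond_H_def Let_def)
  qed
qed

lemma cond_H_second_moment:
  fixes M :: "'a measure" and f :: "'a \<Rightarrow> real"
  assumes [measurable]: "f \<in> borel_measurable M" and f_nonneg: "\<forall>x\<in>space M. 0 \<le> f x"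
    and f_integrable: "integrable M f" and f_integral: "(LINT x|M. f x) = 1"
    and H: "cond_H M f fs m c cs p" and k: "k < m" and fk: "fs k \<in> L2 M" "0 < (LINT x|M. (fs k x)\<^sup>2)"
  shows "integrable M (\<lambda>x. f x * (fs k x)\<^sup>2) \<and>
    (LINT x|M. f x * (fs k x)\<^sup>2) \<le> cs k * c * (LINT x|M. (fs k x)\<^sup>2)"
proof -
  define D where "D = (LINT x|M. (fs k x)\<^sup>2)"
  have D: "0 < D" and c: "0 < c" "0 < cs k"
    using fk H k by (auto simp: D_def cond_H_def)
  have [measurable]: "fs k \<in> borel_measurable M"
    using fk(1) by (rule L2_measurable)
  from H k show ?thesis
  proof (cases rule: cond_HE)
    case one
    then have "integrable M (\<lambda>x. f x * (fs k x)\<^sup>2) \<and>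
        (LINT x|M. f x * (fs k x)\<^sup>2) \<le> (LINT x|M. c * (fs k x)\<^sup>2)"
      using f_nonneg L2_integrable_square[OF fk(1)]
      by (intro integrable_integral_le_of_nonneg_le) (auto intro: mult_right_mono)
    then show ?thesis
      using \<open>cs k = 1\<close> by simp
  next
    case infinity
    then have "\<forall>x\<in>space M. (fs k x)\<^sup>2 \<le> cs k * D"
      by (auto simp: D_def dest: sqrt_ge_absD)
    then have "integrable M (\<lambda>x. f x * (fs k x)\<^sup>2) \<and>
        (LINT x|M. f x * (fs k x)\<^sup>2) \<le> (LINT x|M. cs k * D * f x)"
      using f_nonneg f_integrable
      by (intro integrable_integral_le_of_nonneg_le) (auto simp: mult.commute[of _ "f _"] mult_left_mono)
    then show ?thesis
      using f_integral \<open>c = 1\<close> by (simp add: D_def)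
  next
    case (finite p')
    then have "integrable M (\<lambda>x. f x * (fs k x)\<^sup>2) \<and>
        (LINT x|M. f x * (fs k x)\<^sup>2) \<le> cs k * D * c"
      using f_nonneg c D by (intro weighted_square_integral_le_Hoelder) (auto simp: D_def)
    then show ?thesis
      by (simp add: D_def mult_ac)
  qed
qed

section \<open>A self-normalised deviation inequality\<close>

lemma exp_sub_half_square_le: "exp (x - x\<^sup>2 / 2) \<le> 1 + x + x\<^sup>2 / (2::real)"
proof -
  define \<phi> where "\<phi> y = (1 + y + y\<^sup>2 / 2) * exp (y\<^sup>2 / 2 - y)" for y :: real
  define B where "B y = (1 + y / 2 + y\<^sup>2 / 2) * exp (y\<^sup>2 / 2 - y)" for y :: real
  have deriv: "(\<phi> has_real_derivative y * B y) (at y)" for y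
  proof -
    have "(\<phi> has_real_derivative
        (1 + y) * exp (y\<^sup>2 / 2 - y) + (1 + y + y\<^sup>2 / 2) * (exp (y\<^sup>2 / 2 - y) * (y - 1))) (at y)"
      unfolding \<phi>_def by (auto intro!: derivative_eq_intros simp: power2_eq_square)
    then show ?thesis
      by (rule DERIV_cong) (simp add: B_def power2_eq_square algebra_simps)
  qed
  have B_pos: "0 < B y" for y
  proof -
    have "0 < (y + 1 / 2)\<^sup>2 / 2 + 7 / 8"
      by (simp add: add_nonneg_pos)
    also have "\<dots> = 1 + y / 2 + y\<^sup>2 / 2"
      by (simp add: power2_eq_square field_simps)
    finally show ?thesis
      by (simp add: B_def)
  qed
  have "\<phi> 0 \<le> \<phi> x"
  proof (cases "0 \<le> x")
    case True
    show ?thesis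
      by (rule deriv_nonneg_imp_mono[OF deriv])
        (use True B_pos in \<open>auto intro: mult_nonneg_nonneg less_imp_le\<close>)
  next
    case False
    show ?thesis
      by (rule deriv_nonpos_imp_antimono[OF deriv])
        (use False B_pos in \<open>auto intro: mult_nonpos_nonneg less_imp_le\<close>)
  qed
  then have "exp (x - x\<^sup>2 / 2) * 1 \<le> exp (x - x\<^sup>2 / 2) * \<phi> x"
    by (simp add: \<phi>_def)
  also have "\<dots> = 1 + x + x\<^sup>2 / 2"
    by (simp add: \<phi>_def mult.left_commute flip: exp_add)
  finally show ?thesis
    by simp
qed

lemma power_bracket:
  fixes b x :: real
  assumes "1 \<le> x" "x < b ^ J"
  shows "\<exists>j<J. b ^ j \<le> x \<and> x \<le> b ^ Suc j"
  using assms
proof (induction J)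
  case 0
  then show ?case
    by simp
next
  case (Suc J)
  show ?case
  proof (cases "x < b ^ J")
    case True
    with Suc obtain j where "j < J" "b ^ j \<le> x \<and> x \<le> b ^ Suc j"
      by auto
    then show ?thesis
      by (intro exI[of _ j]) auto
  next
    case False
    with Suc.prems show ?thesis
      by (intro exI[of _ J]) auto
  qed
qed

lemma peeling_scale_exponent_ge:
  fixes L T R S :: real
  assumes L: "0 \<le> L" and T: "0 < T" "T \<le> R" "R \<le> 4 * T" and dev: "4 * L * R < S\<^sup>2"
  shows "3 / 2 * L \<le> sqrt (L / T) * \<bar>S\<bar> - L / T * R / 2"
proof -
  define u where "u = sqrt (R / T)"
  have "1 \<le> R / T" "R / T \<le> 4"
    using T by (simp_all add: field_simps)
  then have u: "1 \<le> u" "u \<le> 2"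
    unfolding u_def using real_sqrt_le_mono[of "R / T" 4] by simp_all
  have "2 * sqrt (L * R) \<le> \<bar>S\<bar>"
    using real_sqrt_le_mono[of "4 * L * R" "S\<^sup>2"] dev by (simp add: real_sqrt_mult)
  then have "sqrt (L / T) * (2 * sqrt (L * R)) \<le> sqrt (L / T) * \<bar>S\<bar>"
    by (rule mult_left_mono) (use L T in simp)
  moreover have "sqrt (L / T) * sqrt (L * R) = sqrt (L * L) * sqrt (R / T)"
    unfolding real_sqrt_mult[symmetric] using T by (simp add: field_simps)
  moreover have "sqrt (L * L) = L"
    using L by simp
  moreover have "L / T * R = L * u\<^sup>2"
    using T by (simp add: u_def)
  moreover have "0 \<le> L * ((u - 1) * (3 - u))"
    using L u by simp
  ultimately show ?thesis
    unfolding u_def[symmetric] by (simp add: power2_eq_square algebra_simps)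
qed

lemma ex_peeling_exponent_ge:
  fixes L T R S :: real
  assumes L: "0 \<le> L" and T: "0 < T" "T \<le> R" "R < 4 ^ J * T" and dev: "4 * L * R < S\<^sup>2"
  shows "\<exists>j<J. \<exists>\<sigma>\<in>{-1, 1}.
           3 / 2 * L \<le> \<sigma> * sqrt (L / (4 ^ j * T)) * S - (\<sigma> * sqrt (L / (4 ^ j * T)))\<^sup>2 / 2 * R"
proof -
  obtain j where j: "j < J" "4 ^ j \<le> R / T" "R / T \<le> 4 ^ Suc j"
    using power_bracket[of "R / T" 4 J] T by (auto simp: field_simps)
  define T' where "T' = 4 ^ j * T"
  have "0 < T'" "T' \<le> R" "R \<le> 4 * T'"
    using j T by (auto simp: T'_def field_simps)
  with L dev have bound: "3 / 2 * L \<le> sqrt (L / T') * \<bar>S\<bar> - L / T' * R / 2"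
    by (intro peeling_scale_exponent_ge)
  define \<sigma> where "\<sigma> = (if 0 \<le> S then 1 else - 1 :: real)"
  have "\<sigma> \<in> {-1, 1}" "\<sigma> * S = \<bar>S\<bar>" "\<sigma>\<^sup>2 = 1"
    by (auto simp: \<sigma>_def)
  have "\<sigma> * sqrt (L / T') * S = sqrt (L / T') * (\<sigma> * S)"
    by (simp only: ac_simps)
  also have "\<dots> = sqrt (L / T') * \<bar>S\<bar>"
    by (simp add: \<open>\<sigma> * S = \<bar>S\<bar>\<close>)
  finally have "\<sigma> * sqrt (L / T') * S = sqrt (L / T') * \<bar>S\<bar>" .
  moreover have "(\<sigma> * sqrt (L / T'))\<^sup>2 = L / T'"
    using L \<open>0 < T'\<close> \<open>\<sigma>\<^sup>2 = 1\<close> by (simp add: power_mult_distrib)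
  ultimately have "3 / 2 * L \<le> \<sigma> * sqrt (L / T') * S - (\<sigma> * sqrt (L / T'))\<^sup>2 / 2 * R"
    using bound by (simp only:)
  with j(1) \<open>\<sigma> \<in> {-1, 1}\<close> show ?thesis
    unfolding T'_def by blast
qed

lemma peeling_sum_le:
  fixes L :: real
  assumes L: "0 \<le> L"
  shows "2 * real (nat \<lceil>L\<rceil>) * exp (- (3 / 2) * L) + 2 * (1 / 4) ^ nat \<lceil>L\<rceil> \<le> 5 * exp (- L)"
proof -
  define J where "J = nat \<lceil>L\<rceil>"
  have J: "L \<le> real J" "real J \<le> L + 1"
    using L unfolding J_def by linarith+
  have "(1 / 4 :: real) ^ J \<le> exp (- 1) ^ J"
    using exp_le by (intro power_mono) (auto simp: exp_minus field_simps)
  also have "\<dots> = exp (- real J)"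
    by (simp flip: exp_of_nat_mult)
  also have "\<dots> \<le> exp (- L)"
    using J by simp
  finally have tail: "2 * (1 / 4) ^ J \<le> 2 * exp (- L)"
    by simp
  have "2 * real J \<le> 2 * (L + 1)"
    using J by simp
  also have "\<dots> \<le> 3 * (1 + L / 2 + (L / 2)\<^sup>2 / 2)"
    using zero_le_power2[of "L - 2 / 3"] by (simp add: power2_eq_square field_simps)
  also have "\<dots> \<le> 3 * exp (L / 2)"
    using exp_lower_Taylor_quadratic[of "L / 2"] L by simp
  finally have "2 * real J \<le> 3 * exp (L / 2)" .
  then have "2 * real J * exp (- (3 / 2) * L) \<le> 3 * exp (L / 2) * exp (- (3 / 2) * L)"
    by (rule mult_right_mono) simp
  also have "\<dots> = 3 * exp (- L)"
    by (simp add: mult.assoc flip: exp_add)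
  finally show ?thesis
    using tail unfolding J_def by linarith
qed

locale iid_sample = prob_space P for P :: "'a measure" +
  fixes N :: nat and Y :: "'a \<Rightarrow> real" and s :: real
  assumes Y_measurable [measurable]: "Y \<in> borel_measurable P"
    and integrable_Y_square: "integrable P (\<lambda>x. (Y x)\<^sup>2)"
    and expectation_Y_square_le: "expectation (\<lambda>x. (Y x)\<^sup>2) \<le> s"
begin

abbreviation sample :: "(nat \<Rightarrow> 'a) measure" where
  "sample \<equiv> PiM {..<N} (\<lambda>_. P)"

sublocale sample: product_prob_space "\<lambda>_. P" "{..<N}"
  by (simp add: product_prob_space_def product_prob_space_axioms_def product_sigma_finite_def
      prob_space_axioms prob_space_imp_sigma_finite)

definition deviation :: "(nat \<Rightarrow> 'a) \<Rightarrow> real" where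
  "deviation \<omega> = (\<Sum>i<N. Y (\<omega> i)) - N * expectation Y"

definition variance_proxy :: "(nat \<Rightarrow> 'a) \<Rightarrow> real" where
  "variance_proxy \<omega> = (\<Sum>i<N. (Y (\<omega> i))\<^sup>2) + N * s"

definition exp_deviation_event :: "real \<Rightarrow> real \<Rightarrow> (nat \<Rightarrow> 'a) set" where
  "exp_deviation_event x l =
     {\<omega> \<in> space sample. x \<le> l * deviation \<omega> - l\<^sup>2 / 2 * variance_proxy \<omega>}"

lemma deviation_measurable [measurable]: "deviation \<in> borel_measurable sample"
  unfolding deviation_def by measurable

lemma variance_proxy_measurable [measurable]: "variance_proxy \<in> borel_measurable sample"
  unfolding variance_proxy_def by measurable

lemma exp_deviation_event_sets [measurable]: "exp_deviation_event x l \<in> sets sample"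
  unfolding exp_deviation_event_def by measurable

lemma s_nonneg: "0 \<le> s"
proof -
  have "0 \<le> expectation (\<lambda>x. (Y x)\<^sup>2)"
    by (intro Bochner_Integration.integral_nonneg) simp
  then show ?thesis
    using expectation_Y_square_le by linarith
qed

lemma integrable_Y: "integrable P Y"
  by (rule square_integrable_imp_integrable[OF Y_measurable integrable_Y_square])

lemma nn_integral_exp_increment_le_1:
  "(\<integral>\<^sup>+y. ennreal (exp (l * (Y y - expectation Y) - l\<^sup>2 / 2 * ((Y y)\<^sup>2 + s))) \<partial>P) \<le> 1"
proof -
  define t where "t = l * expectation Y + l\<^sup>2 / 2 * s"
  define h where "h y = exp (- t) * (1 + l * Y y + l\<^sup>2 / 2 * (Y y)\<^sup>2)" for y
  have pointwise: "exp (l * (Y y - expectation Y) - l\<^sup>2 / 2 * ((Y y)\<^sup>2 + s)) \<le> h y" for y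
  proof -
    have "exp (l * (Y y - expectation Y) - l\<^sup>2 / 2 * ((Y y)\<^sup>2 + s)) =
        exp (- t) * exp (l * Y y - (l * Y y)\<^sup>2 / 2)"
      by (simp add: t_def power_mult_distrib algebra_simps flip: exp_add)
    also have "\<dots> \<le> h y"
      using exp_sub_half_square_le[of "l * Y y"] by (simp add: h_def power_mult_distrib)
    finally show ?thesis .
  qed
  have integrable_h: "integrable P h"
    unfolding h_def using integrable_Y integrable_Y_square by simp
  have h_nonneg: "0 \<le> h y" for y
    by (rule order.trans[OF _ pointwise]) simp
  have "integral\<^sup>L P h = exp (- t) * (1 + l * expectation Y + l\<^sup>2 / 2 * expectation (\<lambda>x. (Y x)\<^sup>2))"
    unfolding h_def using integrable_Y integrable_Y_square by (simp add: prob_space)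
  also have "\<dots> \<le> exp (- t) * (1 + t)"
    using expectation_Y_square_le by (simp add: t_def mult_left_mono)
  also have "\<dots> \<le> exp (- t) * exp t"
    by (intro mult_left_mono exp_ge_add_one_self) simp
  also have "\<dots> = 1"
    by (simp flip: exp_add)
  finally have "integral\<^sup>L P h \<le> 1" .
  have "(\<integral>\<^sup>+y. ennreal (exp (l * (Y y - expectation Y) - l\<^sup>2 / 2 * ((Y y)\<^sup>2 + s))) \<partial>P)
      \<le> (\<integral>\<^sup>+y. ennreal (h y) \<partial>P)"
    by (intro nn_integral_mono ennreal_leI pointwise)
  also have "\<dots> = ennreal (integral\<^sup>L P h)"
    using integrable_h h_nonneg by (intro nn_integral_eq_integral) auto
  also have "\<dots> \<le> 1"
    using \<open>integral\<^sup>L P h \<le> 1\<close> by (simp add: ennreal_le_1)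
  finally show ?thesis .
qed

lemma nn_integral_exp_deviation_le_1:
  "(\<integral>\<^sup>+\<omega>. ennreal (exp (l * deviation \<omega> - l\<^sup>2 / 2 * variance_proxy \<omega>)) \<partial>sample) \<le> 1"
proof -
  define g where "g y = exp (l * (Y y - expectation Y) - l\<^sup>2 / 2 * ((Y y)\<^sup>2 + s))" for y
  have "l * deviation \<omega> - l\<^sup>2 / 2 * variance_proxy \<omega> =
      (\<Sum>i<N. l * (Y (\<omega> i) - expectation Y) - l\<^sup>2 / 2 * ((Y (\<omega> i))\<^sup>2 + s))" for \<omega>
    by (simp add: deviation_def variance_proxy_def sum_subtractf sum.distrib sum_distrib_left
        add_divide_distrib algebra_simps)
  then have "ennreal (exp (l * deviation \<omega> - l\<^sup>2 / 2 * variance_proxy \<omega>)) =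
      (\<Prod>i\<in>{..<N}. ennreal (g (\<omega> i)))" for \<omega>
    by (simp add: g_def exp_sum prod_ennreal)
  then have "(\<integral>\<^sup>+\<omega>. ennreal (exp (l * deviation \<omega> - l\<^sup>2 / 2 * variance_proxy \<omega>)) \<partial>sample) =
      (\<integral>\<^sup>+\<omega>. (\<Prod>i\<in>{..<N}. ennreal (g (\<omega> i))) \<partial>sample)"
    by (simp only:)
  also have "\<dots> = (\<Prod>i\<in>{..<N}. \<integral>\<^sup>+y. ennreal (g y) \<partial>P)"
    by (rule sample.product_nn_integral_prod) (simp_all add: g_def)
  also have "\<dots> \<le> 1"
    using nn_integral_exp_increment_le_1[of l] by (simp add: g_def power_le_one)
  finally show ?thesis .
qed

lemma prob_exp_deviation_event_le: "measure sample (exp_deviation_event x l) \<le> exp (- x)"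
proof -
  define f where "f \<omega> = l * deviation \<omega> - l\<^sup>2 / 2 * variance_proxy \<omega>" for \<omega>
  have "emeasure sample (exp_deviation_event x l) =
      emeasure sample {\<omega> \<in> space sample. f \<omega> \<ge> x}"
    by (simp add: exp_deviation_event_def f_def)
  also have "\<dots> \<le> ennreal (exp (- 1 * x)) *
      (\<integral>\<^sup>+\<omega>. ennreal (exp (1 * f \<omega>)) * indicator (space sample) \<omega> \<partial>sample)"
    by (rule Chernoff_ineq_nn_integral_ge) (simp_all add: f_def)
  also have "(\<integral>\<^sup>+\<omega>. ennreal (exp (1 * f \<omega>)) * indicator (space sample) \<omega> \<partial>sample) =
      (\<integral>\<^sup>+\<omega>. ennreal (exp (f \<omega>)) \<partial>sample)"
    by (intro nn_integral_cong) simp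
  also have "ennreal (exp (- 1 * x)) * \<dots> \<le> ennreal (exp (- 1 * x)) * 1"
    using nn_integral_exp_deviation_le_1[of l] unfolding f_def by (rule mult_left_mono) simp
  finally show ?thesis
    by (simp add: sample.emeasure_eq_measure)
qed

lemma distr_sample_component: "i < N \<Longrightarrow> distr sample P (\<lambda>\<omega>. \<omega> i) = P"
  by (rule sample.PiM_component) simp

lemma integrable_sample_component_square: "i < N \<Longrightarrow> integrable sample (\<lambda>\<omega>. (Y (\<omega> i))\<^sup>2)"
  using integrable_distr_eq[of "\<lambda>\<omega>. \<omega> i" sample P "\<lambda>y. (Y y)\<^sup>2"]
  by (simp add: distr_sample_component integrable_Y_square)

lemma expectation_sample_component_square:
  "i < N \<Longrightarrow> integral\<^sup>L sample (\<lambda>\<omega>. (Y (\<omega> i))\<^sup>2) = expectation (\<lambda>y. (Y y)\<^sup>2)"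
  using integral_distr[of "\<lambda>\<omega>. \<omega> i" sample P "\<lambda>y. (Y y)\<^sup>2"]
  by (simp add: distr_sample_component)

lemma prob_variance_proxy_ge:
  assumes r: "0 < r"
  shows "measure sample {\<omega> \<in> space sample. r \<le> variance_proxy \<omega>} \<le> 2 * N * s / r"
proof -
  have sum_integrable: "integrable sample (\<lambda>\<omega>. \<Sum>i<N. (Y (\<omega> i))\<^sup>2)"
    by (rule Bochner_Integration.integrable_sum) (simp add: integrable_sample_component_square)
  then have integrable: "integrable sample variance_proxy"
    unfolding variance_proxy_def by (rule Bochner_Integration.integrable_add) simp
  have "integral\<^sup>L sample variance_proxy = (\<Sum>i<N. integral\<^sup>L sample (\<lambda>\<omega>. (Y (\<omega> i))\<^sup>2)) + N * s"
    unfolding variance_proxy_def using sum_integrable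
    by (subst Bochner_Integration.integral_add)
      (simp_all add: Bochner_Integration.integral_sum integrable_sample_component_square sample.P.prob_space)
  also have "\<dots> = N * expectation (\<lambda>y. (Y y)\<^sup>2) + N * s"
    by (simp add: expectation_sample_component_square)
  also have "\<dots> \<le> 2 * N * s"
    using mult_left_mono[OF expectation_Y_square_le, of N] by (simp add: mult.commute)
  finally have "integral\<^sup>L sample variance_proxy \<le> 2 * N * s" .
  moreover have "0 \<le> variance_proxy \<omega>" for \<omega>
    unfolding variance_proxy_def using s_nonneg by (simp add: sum_nonneg)
  ultimately show ?thesis
    using integral_Markov_inequality_measure[OF integrable sets.top, of r] r
    by (smt (verit) AE_I2 divide_right_mono)
qed

lemma self_normalized_deviation_subset:
  assumes N: "0 < N" and s: "0 < s" and L: "0 \<le> L"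
  shows "{\<omega> \<in> space sample. 4 * L * variance_proxy \<omega> < (deviation \<omega>)\<^sup>2} \<subseteq>
    (\<Union>(j, \<sigma>) \<in> {..<J} \<times> {-1, 1}. exp_deviation_event (3 / 2 * L) (\<sigma> * sqrt (L / (4 ^ j * (N * s)))))
    \<union> {\<omega> \<in> space sample. 4 ^ J * (N * s) \<le> variance_proxy \<omega>}"
proof
  fix \<omega> assume \<omega>: "\<omega> \<in> {\<omega> \<in> space sample. 4 * L * variance_proxy \<omega> < (deviation \<omega>)\<^sup>2}"
  have Ns: "0 < N * s"
    using N s by simp
  have "N * s \<le> variance_proxy \<omega>"
    by (simp add: variance_proxy_def sum_nonneg)
  then have "(\<exists>j<J. \<exists>\<sigma>\<in>{-1, 1}. \<omega> \<in> exp_deviation_event (3 / 2 * L) (\<sigma> * sqrt (L / (4 ^ j * (N * s)))))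
      \<or> 4 ^ J * (N * s) \<le> variance_proxy \<omega>"
    using ex_peeling_exponent_ge[OF L Ns, of "variance_proxy \<omega>" J "deviation \<omega>"] \<omega>
    by (auto simp: exp_deviation_event_def not_le)
  then show "\<omega> \<in> (\<Union>(j, \<sigma>) \<in> {..<J} \<times> {-1, 1}.
        exp_deviation_event (3 / 2 * L) (\<sigma> * sqrt (L / (4 ^ j * (N * s)))))
      \<union> {\<omega> \<in> space sample. 4 ^ J * (N * s) \<le> variance_proxy \<omega>}"
    using \<omega> by blast
qed

lemma prob_self_normalized_deviation_le:
  assumes N: "0 < N" and s: "0 < s" and L: "0 \<le> L"
  shows "measure sample {\<omega> \<in> space sample. 4 * L * variance_proxy \<omega> < (deviation \<omega>)\<^sup>2} \<le> 5 * exp (- L)"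
proof -
  define J where "J = nat \<lceil>L\<rceil>"
  define I where "I = {..<J} \<times> {-1, 1 :: real}"
  define E where "E = (\<lambda>(j, \<sigma>). exp_deviation_event (3 / 2 * L) (\<sigma> * sqrt (L / (4 ^ j * (N * s)))))"
  define W where "W = {\<omega> \<in> space sample. 4 ^ J * (N * s) \<le> variance_proxy \<omega>}"
  have E_sets: "E i \<in> sets sample" for i
    by (simp add: E_def split: prod.splits)
  have W_sets: "W \<in> sets sample"
    unfolding W_def by measurable
  have UN_sets: "(\<Union>i\<in>I. E i) \<in> sets sample"
    using E_sets by (intro sets.finite_UN) (auto simp: I_def)
  have "{\<omega> \<in> space sample. 4 * L * variance_proxy \<omega> < (deviation \<omega>)\<^sup>2} \<subseteq> (\<Union>i\<in>I. E i) \<union> W"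
    using self_normalized_deviation_subset[OF N s L, of J] by (simp add: I_def E_def W_def)
  moreover have "(\<Union>i\<in>I. E i) \<union> W \<in> sets sample"
    using UN_sets W_sets by simp
  ultimately have "measure sample {\<omega> \<in> space sample. 4 * L * variance_proxy \<omega> < (deviation \<omega>)\<^sup>2}
      \<le> measure sample ((\<Union>i\<in>I. E i) \<union> W)"
    by (rule sample.finite_measure_mono)
  also have "\<dots> \<le> measure sample (\<Union>i\<in>I. E i) + measure sample W"
    using UN_sets W_sets by (rule measure_Un_le)
  also have "measure sample (\<Union>i\<in>I. E i) \<le> (\<Sum>i\<in>I. measure sample (E i))"
    using E_sets by (intro sample.finite_measure_subadditive_finite) (auto simp: I_def)
  also have "\<dots> \<le> (\<Sum>i\<in>I. exp (- (3 / 2 * L)))"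
    by (intro sum_mono) (auto simp: E_def prob_exp_deviation_event_le)
  also have "\<dots> = 2 * real J * exp (- (3 / 2) * L)"
    by (simp add: I_def card_cartesian_product)
  also have "measure sample W \<le> 2 * N * s / (4 ^ J * (N * s))"
    unfolding W_def using N s by (intro prob_variance_proxy_ge) simp
  also have "\<dots> = 2 * (1 / 4) ^ J"
    using N s by (simp add: power_one_over field_simps)
  also have "2 * real J * exp (- (3 / 2) * L) + 2 * (1 / 4) ^ J \<le> 5 * exp (- L)"
    unfolding J_def by (rule peeling_sum_le[OF L])
  finally show ?thesis
    by simp
qed

end

section \<open>Confidence regions\<close>

lemma density_prob_space:
  fixes f :: "'a \<Rightarrow> real"
  assumes [measurable]: "f \<in> borel_measurable M" and nonneg: "\<forall>x\<in>space M. 0 \<le> f x"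
    and total: "(\<integral>\<^sup>+x. ennreal (f x) \<partial>M) = 1"
  shows "integrable M f" "(LINT x|M. f x) = 1" "prob_space (density M f)"
proof -
  show integrable: "integrable M f"
    using nonneg total by (intro integrableI_nonneg) auto
  have "(\<integral>\<^sup>+x. ennreal (f x) \<partial>M) = ennreal (LINT x|M. f x)"
    using integrable nonneg by (intro nn_integral_eq_integral) auto
  moreover have "0 \<le> (LINT x|M. f x)"
    using nonneg by (intro Bochner_Integration.integral_nonneg) auto
  ultimately show "(LINT x|M. f x) = 1"
    using total by simp
  show "prob_space (density M f)"
  proof (rule prob_spaceI)
    have "emeasure (density M f) (space (density M f)) =
        (\<integral>\<^sup>+x. ennreal (f x) * indicator (space M) x \<partial>M)"
      by (simp add: emeasure_density)
    also have "\<dots> = (\<integral>\<^sup>+x. ennreal (f x) \<partial>M)"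
      by (intro nn_integral_cong) auto
    finally show "emeasure (density M f) (space (density M f)) = 1"
      using total by simp
  qed
qed

(* The event that f misses CR_k, with denominators cleared. *)
lemma scaled_deviation_less_iff:
  fixes N :: nat and L V C D T \<mu> :: real
  assumes N: "0 < N" and D: "0 < D"
  shows "4 * L / N * (V / N / D + C) < (T / N / D - \<mu> / D)\<^sup>2 * D \<longleftrightarrow>
         4 * L * (V + N * (C * D)) < (T - N * \<mu>)\<^sup>2"
proof -
  have "4 * L / N * (V / N / D + C) = 4 * L * (V + N * (C * D)) / (N\<^sup>2 * D)"
    "(T / N / D - \<mu> / D)\<^sup>2 * D = (T - N * \<mu>)\<^sup>2 / (N\<^sup>2 * D)"
    using N D by (simp_all add: field_simps power2_eq_square)
  moreover have "0 < real N ^ 2 * D"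
    using N D by simp
  ultimately show ?thesis
    using N by (auto simp: divide_less_cancel)
qed

lemma five_exp_neg_one_plus_ln_le:
  fixes x :: real
  assumes "0 < x"
  shows "5 * exp (- (1 + ln x)) \<le> 2 / x"
proof -
  have "5 / 2 \<le> exp (1 :: real)"
    using exp_lower_Taylor_quadratic[of 1] by simp
  then have "5 * exp (- 1) \<le> (2 :: real)"
    by (simp add: exp_minus field_simps)
  moreover have "exp (- (1 + ln x)) = exp (- 1) / x"
    using assms by (simp add: exp_diff)
  ultimately show ?thesis
    using assms by (simp add: divide_right_mono)
qed

lemma measurable_alpha_hat:
  assumes [measurable]: "fs k \<in> borel_measurable P"
  shows "(\<lambda>\<omega>. alpha_hat M fs N \<omega> k) \<in> borel_measurable (PiM {..<N} (\<lambda>_. P))"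
  unfolding alpha_hat_def by measurable

lemma measurable_beta:
  assumes [measurable]: "fs k \<in> borel_measurable P"
  shows "(\<lambda>\<omega>. beta M fs m c cs N \<omega> \<epsilon> k) \<in> borel_measurable (PiM {..<N} (\<lambda>_. P))"
  unfolding beta_def by measurable

lemma mem_CR_iff:
  "f \<in> L2 M \<Longrightarrow> f \<in> CR M fs m c cs N \<omega> \<epsilon> k \<longleftrightarrow>
     (alpha_hat M fs N \<omega> k - L2_inner M f (fs k) / L2_inner M (fs k) (fs k))\<^sup>2 *
       L2_inner M (fs k) (fs k) \<le> beta M fs m c cs N \<omega> \<epsilon> k"
  by (simp add: CR_eq_slab slab_def)

lemma sets_mem_CR:
  assumes "fs k \<in> borel_measurable P" "f \<in> L2 M"
  shows "{\<omega> \<in> space (PiM {..<N} (\<lambda>_. P)). f \<in> CR M fs m c cs N \<omega> \<epsilon> k} \<in> sets (PiM {..<N} (\<lambda>_. P))"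
proof -
  have [measurable]: "(\<lambda>\<omega>. alpha_hat M fs N \<omega> k) \<in> borel_measurable (PiM {..<N} (\<lambda>_. P))"
    "(\<lambda>\<omega>. beta M fs m c cs N \<omega> \<epsilon> k) \<in> borel_measurable (PiM {..<N} (\<lambda>_. P))"
    using assms(1) by (rule measurable_alpha_hat measurable_beta)+
  show ?thesis
    unfolding mem_CR_iff[OF assms(2)] by measurable
qed

lemma CR_metric_proj_dist2_le_iff:
  assumes "f \<in> L2 M" "fs k \<in> L2 M" "0 < (LINT x|M. (fs k x)\<^sup>2)"
  shows "(\<forall>g\<in>L2 M. \<forall>q. is_metric_proj M (CR M fs m c cs N \<omega> \<epsilon> k) g q \<longrightarrow> dist2 M q f \<le> dist2 M g f)
    \<longleftrightarrow> beta M fs m c cs N \<omega> \<epsilon> k < 0 \<or> f \<in> CR M fs m c cs N \<omega> \<epsilon> k"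
  using slab_metric_proj_dist2_le_iff[OF assms(1,2)] assms(3) by (simp add: CR_eq_slab L2_inner_self)

lemma prob_not_in_CR_le_exp:
  fixes M :: "'a measure" and f :: "'a \<Rightarrow> real"
  assumes [measurable]: "f \<in> borel_measurable M" and f_nonneg: "\<forall>x\<in>space M. 0 \<le> f x"
    and total: "(\<integral>\<^sup>+x. ennreal (f x) \<partial>M) = 1" and f: "f \<in> L2 M" and N: "0 < N"
    and fk: "fs k \<in> L2 M" "0 < (LINT x|M. (fs k x)\<^sup>2)"
    and moment: "integrable M (\<lambda>x. f x * (fs k x)\<^sup>2)"
      "(LINT x|M. f x * (fs k x)\<^sup>2) \<le> cs k * c * (LINT x|M. (fs k x)\<^sup>2)"
    and cs_c: "0 < cs k * c" and L: "0 \<le> 1 + ln (2 * real m / \<epsilon>)"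
  shows "measure (PiM {..<N} (\<lambda>_. density M f))
      {\<omega> \<in> space (PiM {..<N} (\<lambda>_. density M f)). f \<notin> CR M fs m c cs N \<omega> \<epsilon> k}
    \<le> 5 * exp (- (1 + ln (2 * real m / \<epsilon>)))"
proof -
  define D where "D = (LINT x|M. (fs k x)\<^sup>2)"
  define L where "L = 1 + ln (2 * real m / \<epsilon>)"
  have D: "0 < D"
    using fk(2) by (simp add: D_def)
  have [measurable]: "fs k \<in> borel_measurable M"
    using fk(1) by (rule L2_measurable)
  have f_AE: "AE x in M. 0 \<le> f x"
    using f_nonneg by (simp add: AE_I2)
  interpret iid_sample "density M f" N "fs k" "cs k * c * D"
  proof (intro iid_sample.intro iid_sample_axioms.intro)
    show "prob_space (density M f)"
      using density_prob_space[OF _ f_nonneg total] by simp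
    show "integrable (density M f) (\<lambda>x. (fs k x)\<^sup>2)"
      using moment(1) f_AE by (simp add: integrable_density)
    show "integral\<^sup>L (density M f) (\<lambda>x. (fs k x)\<^sup>2) \<le> cs k * c * D"
      using moment(2) f_AE by (simp add: integral_density D_def)
  qed simp
  have expectation: "expectation (fs k) = L2_inner M f (fs k)"
    using f_AE by (simp add: integral_density L2_inner_def)
  have "f \<notin> CR M fs m c cs N \<omega> \<epsilon> k \<longleftrightarrow> 4 * L * variance_proxy \<omega> < (deviation \<omega>)\<^sup>2" for \<omega>
    unfolding mem_CR_iff[OF f] not_le alpha_hat_def beta_def deviation_def variance_proxy_def
      L2_inner_self D_def[symmetric] L_def[symmetric] expectation
    by (rule scaled_deviation_less_iff[OF N D])
  moreover have "0 < cs k * c * D"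
    using cs_c D by simp
  ultimately show ?thesis
    using prob_self_normalized_deviation_le[OF N _ L] by (simp add: L_def)
qed

lemma prob_not_in_CR_le:
  fixes M :: "'a measure" and f :: "'a \<Rightarrow> real"
  assumes [measurable]: "f \<in> borel_measurable M" and f_nonneg: "\<forall>x\<in>space M. 0 \<le> f x"
    and total: "(\<integral>\<^sup>+x. ennreal (f x) \<partial>M) = 1" and f: "f \<in> L2 M" and N: "0 < N"
    and fk: "fs k \<in> L2 M" "0 < (LINT x|M. (fs k x)\<^sup>2)"
    and H: "cond_H M f fs m c cs p" and k: "k < m" and \<epsilon>: "0 < \<epsilon>" "\<epsilon> < 1"
  shows "measure (PiM {..<N} (\<lambda>_. density M f))
      {\<omega> \<in> space (PiM {..<N} (\<lambda>_. density M f)). f \<notin> CR M fs m c cs N \<omega> \<epsilon> k} \<le> \<epsilon> / m"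
proof -
  have x: "1 \<le> 2 * real m / \<epsilon>"
    using k \<epsilon> by (simp add: field_simps)
  have "0 < cs k * c"
    using H k by (simp add: cond_H_def)
  moreover have "integrable M (\<lambda>x. f x * (fs k x)\<^sup>2) \<and>
      (LINT x|M. f x * (fs k x)\<^sup>2) \<le> cs k * c * (LINT x|M. (fs k x)\<^sup>2)"
    using density_prob_space[OF _ f_nonneg total] f_nonneg H k fk
    by (intro cond_H_second_moment) auto
  ultimately have "measure (PiM {..<N} (\<lambda>_. density M f))
      {\<omega> \<in> space (PiM {..<N} (\<lambda>_. density M f)). f \<notin> CR M fs m c cs N \<omega> \<epsilon> k}
    \<le> 5 * exp (- (1 + ln (2 * real m / \<epsilon>)))"
    using x by (intro prob_not_in_CR_le_exp[where fs = fs and k = k, OF _ f_nonneg total f N fk]) auto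
  also have "\<dots> \<le> 2 / (2 * real m / \<epsilon>)"
    using x by (intro five_exp_neg_one_plus_ln_le) simp
  also have "\<dots> = \<epsilon> / m"
    by simp
  finally show ?thesis .
qed

lemma prob_all_in_CR_ge:
  fixes M :: "'a measure" and f :: "'a \<Rightarrow> real"
  assumes [measurable]: "f \<in> borel_measurable M" and f_nonneg: "\<forall>x\<in>space M. 0 \<le> f x"
    and total: "(\<integral>\<^sup>+x. ennreal (f x) \<partial>M) = 1" and f: "f \<in> L2 M" and "0 < N"
    and fs: "\<forall>k<m. fs k \<in> L2 M \<and> 0 < (LINT x|M. (fs k x)\<^sup>2)"
    and "cond_H M f fs m c cs p" and \<epsilon>: "0 < \<epsilon>"
  defines "\<Omega> \<equiv> PiM {..<N} (\<lambda>_. density M f)"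
  shows "1 - \<epsilon> \<le> measure \<Omega> {\<omega> \<in> space \<Omega>. \<forall>k<m. f \<in> CR M fs m c cs N \<omega> \<epsilon> k}"
proof (cases "\<epsilon> < 1")
  case True
  define miss where "miss k = {\<omega> \<in> space \<Omega>. f \<notin> CR M fs m c cs N \<omega> \<epsilon> k}" for k
  interpret \<Omega>: prob_space \<Omega>
    unfolding \<Omega>_def using density_prob_space[OF _ f_nonneg total] by (intro prob_space_PiM) simp
  have in_CR_sets: "{\<omega> \<in> space \<Omega>. f \<in> CR M fs m c cs N \<omega> \<epsilon> k} \<in> sets \<Omega>" if "k < m" for k
    unfolding \<Omega>_def using fs that by (intro sets_mem_CR f) (auto dest: L2_measurable)
  then have miss_sets: "miss k \<in> sets \<Omega>" if "k < m" for k
    using that by (auto simp: miss_def dest: sets.sets_Collect_neg)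
  have "measure \<Omega> (space \<Omega> - {\<omega> \<in> space \<Omega>. \<forall>k<m. f \<in> CR M fs m c cs N \<omega> \<epsilon> k})
      = measure \<Omega> (\<Union>k\<in>{..<m}. miss k)"
    by (rule arg_cong[where f = "measure \<Omega>"]) (auto simp: miss_def)
  also have "\<dots> \<le> (\<Sum>k\<in>{..<m}. measure \<Omega> (miss k))"
    using miss_sets by (intro \<Omega>.finite_measure_subadditive_finite) auto
  also have "\<dots> \<le> (\<Sum>k\<in>{..<m}. \<epsilon> / m)"
    using assms True unfolding miss_def \<Omega>_def by (intro sum_mono prob_not_in_CR_le) auto
  also have "\<dots> \<le> \<epsilon>"
    using \<epsilon> by (cases "m = 0") auto
  finally show ?thesis
    using \<Omega>.prob_compl in_CR_sets by (simp add: sets.sets_Collect_finite_All)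
qed (simp add: measure_nonneg order.trans[of _ 0])

theorem corollary2:
  fixes M :: "'a measure" and f :: "'a \<Rightarrow> real" and fs :: "nat \<Rightarrow> 'a \<Rightarrow> real"
    and m N :: nat and c \<epsilon> :: real and cs :: "nat \<Rightarrow> real" and p :: ereal
  assumes "sigma_finite_measure M"
    and "f \<in> borel_measurable M" and "\<forall>x\<in>space M. 0 \<le> f x"
    and "(\<integral>\<^sup>+ x. ennreal (f x) \<partial>M) = 1"
    and "f \<in> L2 M"
    and "0 < N"
    and "\<forall>k<m. fs k \<in> L2 M \<and> (LINT x|M. (fs k x)\<^sup>2) > 0"
    and "cond_H M f fs m c cs p"
    and "\<epsilon> > 0"
  shows "measure (PiM {..<N} (\<lambda>_. density M f))
           {\<omega> \<in> space (PiM {..<N} (\<lambda>_. density M f)).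
              \<forall>k<m. \<forall>g\<in>L2 M. \<forall>q. is_metric_proj M (CR M fs m c cs N \<omega> \<epsilon> k) g q
                 \<longrightarrow> dist2 M q f \<le> dist2 M g f}
         \<ge> 1 - \<epsilon>"
proof -
  define \<Omega> where "\<Omega> = PiM {..<N} (\<lambda>_. density M f)"
  define good where "good = {\<omega> \<in> space \<Omega>. \<forall>k\<in>{..<m}.
      beta M fs m c cs N \<omega> \<epsilon> k < 0 \<or> f \<in> CR M fs m c cs N \<omega> \<epsilon> k}"
  interpret \<Omega>: prob_space \<Omega>
    unfolding \<Omega>_def using density_prob_space[OF assms(2-4)] by (intro prob_space_PiM) simp
  have fs_measurable: "fs k \<in> borel_measurable (density M f)" if "k < m" for k
    using assms(7) that by (auto dest: L2_measurable)
  have "good \<in> sets \<Omega>"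
    unfolding good_def \<Omega>_def using fs_measurable sets_mem_CR[OF _ assms(5)]
    by (intro sets.sets_Collect_finite_All sets.sets_Collect_disj
        measurable_beta[THEN measurable_sets_Collect]) auto
  then have "measure \<Omega> {\<omega> \<in> space \<Omega>. \<forall>k<m. f \<in> CR M fs m c cs N \<omega> \<epsilon> k} \<le> measure \<Omega> good"
    by (intro \<Omega>.finite_measure_mono) (auto simp: good_def)
  moreover have "{\<omega> \<in> space \<Omega>. \<forall>k<m. \<forall>g\<in>L2 M. \<forall>q. is_metric_proj M (CR M fs m c cs N \<omega> \<epsilon> k) g q
      \<longrightarrow> dist2 M q f \<le> dist2 M g f} = good"
    using CR_metric_proj_dist2_le_iff[OF assms(5)] assms(7) by (auto simp: good_def)
  ultimately show ?thesis
    using prob_all_in_CR_ge[OF assms(2-9)] unfolding \<Omega>_def by simp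
qed

end
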